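(* Let $S$ be an intra-regular $\Gamma$-AG$^{**}$-groupoid and $A$ a nonempty subset of $S$. The following are equivalent: (i) $A$ is a left $\Gamma$-ideal of $S$; (ii) $A$ is a right $\Gamma$-ideal; (iii) $A$ is a two-sided $\Gamma$-ideal; (iv) $A\Gamma S=A$ and $S\Gamma A=A$; (v) $A$ is a $\Gamma$-quasi ideal; (vi) $A$ is a $\Gamma$-$(1,2)$-ideal; (vii) $A$ is a $\Gamma$-generalized bi-ideal; (viii) $A$ is a $\Gamma$-bi-ideal; (ix) $A$ is a $\Gamma$-interior ideal.
   Context: Let $S$ and $\Gamma$ be nonempty sets with a map $S\times\Gamma\times S\to S$, $(x,\gamma,y)\mapsto x\gamma y$. $S$ is a $\Gamma$-AG-groupoid if $(x\gamma y)\delta z=(z\gamma y)\delta x$ for all $x,y,z\in S$, $\gamma,\delta\in\Gamma$; it is a $\Gamma$-AG$^{**}$-groupoid if moreover $a\alpha(b\beta c)=b\alpha(a\beta c)$ for all $a,b,c\in S$, $\alpha,\beta\in\Gamma$. For subsets $A,B\subseteq S$, $A\Gamma B=\{a\gamma b: a\in A,\gamma\in\Gamma,b\in B\}$. $S$ is intra-regular if for every $a\in S$ there exist $x,y\in S$ and $\beta,\gamma,\delta\in\Gamma$ with $a=(x\beta(a\delta a))\gamma y$. For a nonempty $A\subseteq S$: left (right) $\Gamma$-ideal means $S\Gamma A\subseteq A$ ($A\Gamma S\subseteq A$); two-sided $\Gamma$-ideal means both; $\Gamma$-generalized bi-ideal means $(A\Gamma S)\Gamma A\subseteq A$. The following all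 require $A\Gamma A\subseteq A$ in addition: $\Gamma$-bi-ideal: $(A\Gamma S)\Gamma A\subseteq A$; $\Gamma$-interior ideal: $(S\Gamma A)\Gamma S\subseteq A$; $\Gamma$-quasi ideal: $S\Gamma A\cap A\Gamma S\subseteq A$; $\Gamma$-$(1,2)$-ideal: $(A\Gamma S)\Gamma(A\Gamma A)\subseteq A$. *)

theory Defs
  imports Main
begin

definition gamma_closed :: "'a set \<Rightarrow> 'g set \<Rightarrow> ('a \<Rightarrow> 'g \<Rightarrow> 'a \<Rightarrow> 'a) \<Rightarrow> bool" where
  "gamma_closed S G m \<longleftrightarrow> (\<forall>x\<in>S. \<forall>g\<in>G. \<forall>y\<in>S. m x g y \<in> S)"

definition gamma_AG :: "'a set \<Rightarrow> 'g set \<Rightarrow> ('a \<Rightarrow> 'g \<Rightarrow> 'a \<Rightarrow> 'a) \<Rightarrow> bool" where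
  "gamma_AG S G m \<longleftrightarrow> S \<noteq> {} \<and> G \<noteq> {} \<and> gamma_closed S G m \<and>
     (\<forall>x\<in>S. \<forall>y\<in>S. \<forall>z\<in>S. \<forall>g\<in>G. \<forall>d\<in>G. m (m x g y) d z = m (m z g y) d x)"

definition gamma_AGss :: "'a set \<Rightarrow> 'g set \<Rightarrow> ('a \<Rightarrow> 'g \<Rightarrow> 'a \<Rightarrow> 'a) \<Rightarrow> bool" where
  "gamma_AGss S G m \<longleftrightarrow> gamma_AG S G m \<and>
     (\<forall>a\<in>S. \<forall>b\<in>S. \<forall>c\<in>S. \<forall>al\<in>G. \<forall>be\<in>G. m a al (m b be c) = m b al (m a be c))"

definition gprod :: "('a \<Rightarrow> 'g \<Rightarrow> 'a \<Rightarrow> 'a) \<Rightarrow> 'a set \<Rightarrow> 'g set \<Rightarrow> 'a set \<Rightarrow> 'a set" where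
  "gprod m A G B = {m a g b | a g b. a \<in> A \<and> g \<in> G \<and> b \<in> B}"

definition intra_regular :: "'a set \<Rightarrow> 'g set \<Rightarrow> ('a \<Rightarrow> 'g \<Rightarrow> 'a \<Rightarrow> 'a) \<Rightarrow> bool" where
  "intra_regular S G m \<longleftrightarrow> (\<forall>a\<in>S. \<exists>x\<in>S. \<exists>y\<in>S. \<exists>be\<in>G. \<exists>ga\<in>G. \<exists>de\<in>G.
      a = m (m x be (m a de a)) ga y)"

definition left_ideal where
  "left_ideal S G m A \<longleftrightarrow> A \<noteq> {} \<and> A \<subseteq> S \<and> gprod m S G A \<subseteq> A"

definition right_ideal where
  "right_ideal S G m A \<longleftrightarrow> A \<noteq> {} \<and> A \<subseteq> S \<and> gprod m A G S \<subseteq> A"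

definition two_sided_ideal where
  "two_sided_ideal S G m A \<longleftrightarrow> left_ideal S G m A \<and> right_ideal S G m A"

definition gen_bi_ideal where
  "gen_bi_ideal S G m A \<longleftrightarrow> A \<noteq> {} \<and> A \<subseteq> S \<and> gprod m (gprod m A G S) G A \<subseteq> A"

definition bi_ideal where
  "bi_ideal S G m A \<longleftrightarrow> A \<noteq> {} \<and> A \<subseteq> S \<and> gprod m A G A \<subseteq> A \<and>
     gprod m (gprod m A G S) G A \<subseteq> A"

definition interior_ideal where
  "interior_ideal S G m A \<longleftrightarrow> A \<noteq> {} \<and> A \<subseteq> S \<and> gprod m A G A \<subseteq> A \<and>
     gprod m (gprod m S G A) G S \<subseteq> A"

definition quasi_ideal where
  "quasi_ideal S G m A \<longleftrightarrow> A \<noteq> {} \<and> A \<subseteq> S \<and> gprod m A G A \<subseteq> A \<and>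
     gprod m S G A \<inter> gprod m A G S \<subseteq> A"

definition one_two_ideal where
  "one_two_ideal S G m A \<longleftrightarrow> A \<noteq> {} \<and> A \<subseteq> S \<and> gprod m A G A \<subseteq> A \<and>
     gprod m (gprod m A G S) G (gprod m A G A) \<subseteq> A"

end

theory Submission
  imports Defs
begin

(* Proof idea: every one of the nine conditions is shown to be equivalent to
   A being a left Gamma-ideal.  Intra-regularity gives, for every a in S, a
   "witness" presentation a = (x b (a d a)) c y.  Using only the left invertive
   law (x g y) d z = (z g y) d x and the AG** law a g (b d c) = b g (a d c), each
   product s g a (resp. a g s) is rewritten into a shape that lies in the set
   controlled by the condition at hand, e.g. (A G S) G A for generalized
   bi-ideals.  The converse directions are generic: a two-sided
   Gamma-ideal is a quasi, bi, (1,2)- and interior ideal in any Gamma-structure. *)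


lemma gprod_memI: "p \<in> P \<Longrightarrow> \<alpha> \<in> G \<Longrightarrow> q \<in> Q \<Longrightarrow> m p \<alpha> q \<in> gprod m P G Q"
  unfolding gprod_def by blast

lemma gprod_subset_iff: "gprod m P G Q \<subseteq> C \<longleftrightarrow> (\<forall>p\<in>P. \<forall>\<alpha>\<in>G. \<forall>q\<in>Q. m p \<alpha> q \<in> C)"
  unfolding gprod_def by blast

lemma gprod_mono: "P \<subseteq> P' \<Longrightarrow> Q \<subseteq> Q' \<Longrightarrow> gprod m P G Q \<subseteq> gprod m P' G Q'"
  unfolding gprod_def by blast

lemma two_sided_imp_quasi: "two_sided_ideal S G m A \<Longrightarrow> quasi_ideal S G m A"
  unfolding two_sided_ideal_def left_ideal_def right_ideal_def quasi_ideal_def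
  by (meson gprod_mono order_refl order_trans inf.coboundedI1)

lemma two_sided_imp_bi: "two_sided_ideal S G m A \<Longrightarrow> bi_ideal S G m A"
  unfolding two_sided_ideal_def left_ideal_def right_ideal_def bi_ideal_def
  by (meson gprod_mono order_refl order_trans)

lemma two_sided_imp_one_two: "two_sided_ideal S G m A \<Longrightarrow> one_two_ideal S G m A"
  unfolding two_sided_ideal_def left_ideal_def right_ideal_def one_two_ideal_def
  by (meson gprod_mono order_refl order_trans)

lemma two_sided_imp_interior: "two_sided_ideal S G m A \<Longrightarrow> interior_ideal S G m A"
  unfolding two_sided_ideal_def left_ideal_def right_ideal_def interior_ideal_def
  by (meson gprod_mono order_refl order_trans)

lemma left_ideal_if_product_eq:
  "A \<noteq> {} \<Longrightarrow> A \<subseteq> S \<Longrightarrow> gprod m S G A = A \<Longrightarrow> left_ideal S G m A"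
  unfolding left_ideal_def by blast

lemma bi_imp_gen_bi: "bi_ideal S G m A \<Longrightarrow> gen_bi_ideal S G m A"
  unfolding bi_ideal_def gen_bi_ideal_def by blast

text \<open>A Gamma-AG**-groupoid, with the ternary operation written \<open>x \<cdot>\<^bsub>\<alpha>\<^esub> y\<close>
  (left-associative, so \<open>x \<cdot>\<^bsub>\<alpha>\<^esub> y \<cdot>\<^bsub>\<beta>\<^esub> z\<close> means \<open>(x \<cdot>\<^bsub>\<alpha>\<^esub> y) \<cdot>\<^bsub>\<beta>\<^esub> z\<close>).\<close>

locale gamma_AGss_groupoid =
  fixes S :: "'a set" and G :: "'g set" and m :: "'a \<Rightarrow> 'g \<Rightarrow> 'a \<Rightarrow> 'a"
    ("(_ \<cdot>\<^bsub>_\<^esub> _)" [70, 0, 71] 70)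
  assumes AGss: "gamma_AGss S G m"
begin

lemma closed [simp]: "x \<in> S \<Longrightarrow> \<alpha> \<in> G \<Longrightarrow> y \<in> S \<Longrightarrow> x \<cdot>\<^bsub>\<alpha>\<^esub> y \<in> S"
  using AGss unfolding gamma_AGss_def gamma_AG_def gamma_closed_def by blast

lemma left_invertive:
  "\<lbrakk>x \<in> S; y \<in> S; z \<in> S; \<alpha> \<in> G; \<beta> \<in> G\<rbrakk> \<Longrightarrow> x \<cdot>\<^bsub>\<alpha>\<^esub> y \<cdot>\<^bsub>\<beta>\<^esub> z = z \<cdot>\<^bsub>\<alpha>\<^esub> y \<cdot>\<^bsub>\<beta>\<^esub> x"
  using AGss unfolding gamma_AGss_def gamma_AG_def by blast

lemma left_permutable:
  "\<lbrakk>x \<in> S; y \<in> S; z \<in> S; \<alpha> \<in> G; \<beta> \<in> G\<rbrakk> \<Longrightarrow> x \<cdot>\<^bsub>\<alpha>\<^esub> (y \<cdot>\<^bsub>\<beta>\<^esub> z) = y \<cdot>\<^bsub>\<alpha>\<^esub> (x \<cdot>\<^bsub>\<beta>\<^esub> z)"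
  using AGss unfolding gamma_AGss_def by blast

lemma medial:
  assumes "x \<in> S" "y \<in> S" "z \<in> S" "w \<in> S" "\<alpha> \<in> G" "\<beta> \<in> G" "\<gamma> \<in> G"
  shows "x \<cdot>\<^bsub>\<alpha>\<^esub> y \<cdot>\<^bsub>\<beta>\<^esub> (z \<cdot>\<^bsub>\<gamma>\<^esub> w) = x \<cdot>\<^bsub>\<alpha>\<^esub> z \<cdot>\<^bsub>\<beta>\<^esub> (y \<cdot>\<^bsub>\<gamma>\<^esub> w)"
proof -
  have "x \<cdot>\<^bsub>\<alpha>\<^esub> y \<cdot>\<^bsub>\<beta>\<^esub> (z \<cdot>\<^bsub>\<gamma>\<^esub> w) = z \<cdot>\<^bsub>\<gamma>\<^esub> w \<cdot>\<^bsub>\<alpha>\<^esub> y \<cdot>\<^bsub>\<beta>\<^esub> x"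
    using assms by (metis left_invertive closed)
  also have "\<dots> = y \<cdot>\<^bsub>\<gamma>\<^esub> w \<cdot>\<^bsub>\<alpha>\<^esub> z \<cdot>\<^bsub>\<beta>\<^esub> x"
    using assms by (metis left_invertive closed)
  also have "\<dots> = x \<cdot>\<^bsub>\<alpha>\<^esub> z \<cdot>\<^bsub>\<beta>\<^esub> (y \<cdot>\<^bsub>\<gamma>\<^esub> w)"
    using assms by (metis left_invertive closed)
  finally show ?thesis .
qed

text \<open>Each one exhibits \<open>a\<close>, \<open>s \<cdot>\<^bsub>\<alpha>\<^esub> a\<close> or \<open>a \<cdot>\<^bsub>\<alpha>\<^esub> s\<close> in the shape needed for one
  of the ideal conditions.\<close>

context
  fixes a x y \<beta> \<gamma> \<delta>
  assumes a: "a \<in> S" and x: "x \<in> S" and y: "y \<in> S" and \<beta>: "\<beta> \<in> G" and \<gamma>: "\<gamma> \<in> G" and \<delta>: "\<delta> \<in> G"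
    and a_eq: "a = x \<cdot>\<^bsub>\<beta>\<^esub> (a \<cdot>\<^bsub>\<delta>\<^esub> a) \<cdot>\<^bsub>\<gamma>\<^esub> y"
begin

lemmas witness_mem = a x y \<beta> \<gamma> \<delta>

text \<open>\<open>a \<in> A\<Gamma>S\<close> as soon as \<open>a \<cdot>\<^bsub>\<beta>\<^esub> (x \<cdot>\<^bsub>\<delta>\<^esub> a) \<in> A\<close>.\<close>

lemma witness_self_right: "a = a \<cdot>\<^bsub>\<beta>\<^esub> (x \<cdot>\<^bsub>\<delta>\<^esub> a) \<cdot>\<^bsub>\<gamma>\<^esub> y"
  using a_eq witness_mem by (metis left_permutable)

text \<open>\<open>a \<in> S\<Gamma>{a}\<close>: every element is a left multiple of itself.\<close>

lemma witness_self_left: "a = y \<cdot>\<^bsub>\<beta>\<^esub> (x \<cdot>\<^bsub>\<delta>\<^esub> a) \<cdot>\<^bsub>\<gamma>\<^esub> a"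
  using witness_self_right witness_mem by (metis left_invertive closed)

text \<open>Shape \<open>(S\<Gamma>(A\<Gamma>A))\<Gamma>S\<close>, used for interior ideals.\<close>

lemma witness_interior:
  assumes "s \<in> S" "\<alpha> \<in> G"
  shows "s \<cdot>\<^bsub>\<alpha>\<^esub> a = x \<cdot>\<^bsub>\<beta>\<^esub> (a \<cdot>\<^bsub>\<delta>\<^esub> a) \<cdot>\<^bsub>\<alpha>\<^esub> (s \<cdot>\<^bsub>\<gamma>\<^esub> y)"
  using a_eq assms witness_mem by (metis left_permutable closed)

text \<open>Shape \<open>W \<cdot>\<^bsub>\<alpha>\<^esub> x\<close> with \<open>W \<in> S\<Gamma>(A\<Gamma>A)\<close>; by \<open>left_permutable\<close> also \<open>W \<in> A\<Gamma>S\<close>.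
  Used for right and quasi ideals.\<close>

lemma witness_quasi:
  assumes "s \<in> S" "\<alpha> \<in> G"
  shows "s \<cdot>\<^bsub>\<alpha>\<^esub> a = s \<cdot>\<^bsub>\<gamma>\<^esub> y \<cdot>\<^bsub>\<beta>\<^esub> (a \<cdot>\<^bsub>\<delta>\<^esub> a) \<cdot>\<^bsub>\<alpha>\<^esub> x"
  using witness_interior[OF assms] assms witness_mem by (metis left_invertive closed)

text \<open>Right multiples of \<open>a\<close> as left multiples; used for left implies right.\<close>

lemma witness_right:
  assumes "s \<in> S" "\<alpha> \<in> G"
  shows "a \<cdot>\<^bsub>\<alpha>\<^esub> s = x \<cdot>\<^bsub>\<alpha>\<^esub> (s \<cdot>\<^bsub>\<gamma>\<^esub> y \<cdot>\<^bsub>\<beta>\<^esub> (a \<cdot>\<^bsub>\<delta>\<^esub> a))"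
proof -
  have "a \<cdot>\<^bsub>\<alpha>\<^esub> s = s \<cdot>\<^bsub>\<gamma>\<^esub> y \<cdot>\<^bsub>\<alpha>\<^esub> (x \<cdot>\<^bsub>\<beta>\<^esub> (a \<cdot>\<^bsub>\<delta>\<^esub> a))"
    using a_eq assms witness_mem by (metis left_invertive closed)
  also have "\<dots> = x \<cdot>\<^bsub>\<alpha>\<^esub> (s \<cdot>\<^bsub>\<gamma>\<^esub> y \<cdot>\<^bsub>\<beta>\<^esub> (a \<cdot>\<^bsub>\<delta>\<^esub> a))"
    using assms witness_mem by (metis left_permutable closed)
  finally show ?thesis .
qed

text \<open>Shape \<open>(A\<Gamma>S)\<Gamma>(A\<Gamma>A)\<close>, used for (1,2)-ideals.\<close>

lemma witness_one_two:
  assumes "s \<in> S" "\<alpha> \<in> G"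
  shows "s \<cdot>\<^bsub>\<alpha>\<^esub> a = a \<cdot>\<^bsub>\<delta>\<^esub> (s \<cdot>\<^bsub>\<gamma>\<^esub> y \<cdot>\<^bsub>\<beta>\<^esub> x \<cdot>\<^bsub>\<beta>\<^esub> x \<cdot>\<^bsub>\<gamma>\<^esub> y) \<cdot>\<^bsub>\<alpha>\<^esub> (a \<cdot>\<^bsub>\<delta>\<^esub> a)"
proof -
  note mem = assms witness_mem
  have "s \<cdot>\<^bsub>\<alpha>\<^esub> a = x \<cdot>\<^bsub>\<beta>\<^esub> (a \<cdot>\<^bsub>\<delta>\<^esub> a) \<cdot>\<^bsub>\<alpha>\<^esub> (s \<cdot>\<^bsub>\<gamma>\<^esub> y)"
    using witness_interior[OF assms] .
  also have "\<dots> = x \<cdot>\<^bsub>\<beta>\<^esub> (a \<cdot>\<^bsub>\<delta>\<^esub> (x \<cdot>\<^bsub>\<beta>\<^esub> (a \<cdot>\<^bsub>\<delta>\<^esub> a) \<cdot>\<^bsub>\<gamma>\<^esub> y)) \<cdot>\<^bsub>\<alpha>\<^esub> (s \<cdot>\<^bsub>\<gamma>\<^esub> y)"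
    using a_eq by simp
  also have "\<dots> = x \<cdot>\<^bsub>\<beta>\<^esub> (x \<cdot>\<^bsub>\<beta>\<^esub> (a \<cdot>\<^bsub>\<delta>\<^esub> a) \<cdot>\<^bsub>\<delta>\<^esub> (a \<cdot>\<^bsub>\<gamma>\<^esub> y)) \<cdot>\<^bsub>\<alpha>\<^esub> (s \<cdot>\<^bsub>\<gamma>\<^esub> y)"
    using mem by (metis left_permutable closed)
  also have "\<dots> = x \<cdot>\<^bsub>\<beta>\<^esub> (a \<cdot>\<^bsub>\<delta>\<^esub> a) \<cdot>\<^bsub>\<beta>\<^esub> (x \<cdot>\<^bsub>\<delta>\<^esub> (a \<cdot>\<^bsub>\<gamma>\<^esub> y)) \<cdot>\<^bsub>\<alpha>\<^esub> (s \<cdot>\<^bsub>\<gamma>\<^esub> y)"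
    using mem by (metis left_permutable closed)
  also have "\<dots> = x \<cdot>\<^bsub>\<delta>\<^esub> (a \<cdot>\<^bsub>\<gamma>\<^esub> y) \<cdot>\<^bsub>\<beta>\<^esub> (a \<cdot>\<^bsub>\<delta>\<^esub> a) \<cdot>\<^bsub>\<beta>\<^esub> x \<cdot>\<^bsub>\<alpha>\<^esub> (s \<cdot>\<^bsub>\<gamma>\<^esub> y)"
    using mem by (metis left_invertive closed)
  also have "\<dots> = s \<cdot>\<^bsub>\<gamma>\<^esub> y \<cdot>\<^bsub>\<beta>\<^esub> x \<cdot>\<^bsub>\<alpha>\<^esub> (x \<cdot>\<^bsub>\<delta>\<^esub> (a \<cdot>\<^bsub>\<gamma>\<^esub> y) \<cdot>\<^bsub>\<beta>\<^esub> (a \<cdot>\<^bsub>\<delta>\<^esub> a))"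
    using mem by (metis left_invertive closed)
  also have "\<dots> = s \<cdot>\<^bsub>\<gamma>\<^esub> y \<cdot>\<^bsub>\<beta>\<^esub> x \<cdot>\<^bsub>\<alpha>\<^esub> (a \<cdot>\<^bsub>\<delta>\<^esub> a \<cdot>\<^bsub>\<delta>\<^esub> (a \<cdot>\<^bsub>\<gamma>\<^esub> y) \<cdot>\<^bsub>\<beta>\<^esub> x)"
    using mem by (metis left_invertive closed)
  also have "\<dots> = a \<cdot>\<^bsub>\<delta>\<^esub> a \<cdot>\<^bsub>\<delta>\<^esub> (a \<cdot>\<^bsub>\<gamma>\<^esub> y) \<cdot>\<^bsub>\<alpha>\<^esub> (s \<cdot>\<^bsub>\<gamma>\<^esub> y \<cdot>\<^bsub>\<beta>\<^esub> x \<cdot>\<^bsub>\<beta>\<^esub> x)"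
    using mem by (metis left_permutable closed)
  also have "\<dots> = s \<cdot>\<^bsub>\<gamma>\<^esub> y \<cdot>\<^bsub>\<beta>\<^esub> x \<cdot>\<^bsub>\<beta>\<^esub> x \<cdot>\<^bsub>\<delta>\<^esub> (a \<cdot>\<^bsub>\<gamma>\<^esub> y) \<cdot>\<^bsub>\<alpha>\<^esub> (a \<cdot>\<^bsub>\<delta>\<^esub> a)"
    using mem by (metis left_invertive closed)
  also have "\<dots> = a \<cdot>\<^bsub>\<delta>\<^esub> (s \<cdot>\<^bsub>\<gamma>\<^esub> y \<cdot>\<^bsub>\<beta>\<^esub> x \<cdot>\<^bsub>\<beta>\<^esub> x \<cdot>\<^bsub>\<gamma>\<^esub> y) \<cdot>\<^bsub>\<alpha>\<^esub> (a \<cdot>\<^bsub>\<delta>\<^esub> a)"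
    using mem by (metis left_permutable closed)
  finally show ?thesis .
qed

text \<open>Shape \<open>(A\<Gamma>S)\<Gamma>A\<close>, used for generalized bi-ideals; obtained from the previous
  shape by moving the factor \<open>a \<cdot>\<^bsub>\<delta>\<^esub> a\<close> out of the right argument.\<close>

lemma witness_gen_bi:
  assumes "s \<in> S" "\<alpha> \<in> G"
  shows "s \<cdot>\<^bsub>\<alpha>\<^esub> a = a \<cdot>\<^bsub>\<delta>\<^esub> (a \<cdot>\<^bsub>\<delta>\<^esub> (s \<cdot>\<^bsub>\<gamma>\<^esub> y \<cdot>\<^bsub>\<beta>\<^esub> x \<cdot>\<^bsub>\<beta>\<^esub> x) \<cdot>\<^bsub>\<gamma>\<^esub> y) \<cdot>\<^bsub>\<alpha>\<^esub> a"
proof -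
  define u where "u = s \<cdot>\<^bsub>\<gamma>\<^esub> y \<cdot>\<^bsub>\<beta>\<^esub> x \<cdot>\<^bsub>\<beta>\<^esub> x"
  have u: "u \<in> S" using assms witness_mem unfolding u_def by simp
  have "s \<cdot>\<^bsub>\<alpha>\<^esub> a = a \<cdot>\<^bsub>\<delta>\<^esub> (u \<cdot>\<^bsub>\<gamma>\<^esub> y) \<cdot>\<^bsub>\<alpha>\<^esub> (a \<cdot>\<^bsub>\<delta>\<^esub> a)"
    using witness_one_two[OF assms] unfolding u_def .
  also have "\<dots> = a \<cdot>\<^bsub>\<delta>\<^esub> a \<cdot>\<^bsub>\<delta>\<^esub> (u \<cdot>\<^bsub>\<gamma>\<^esub> y) \<cdot>\<^bsub>\<alpha>\<^esub> a"
    using u assms witness_mem by (metis left_invertive closed)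
  also have "\<dots> = a \<cdot>\<^bsub>\<delta>\<^esub> u \<cdot>\<^bsub>\<delta>\<^esub> (a \<cdot>\<^bsub>\<gamma>\<^esub> y) \<cdot>\<^bsub>\<alpha>\<^esub> a"
    using u witness_mem by (simp add: medial)
  also have "\<dots> = a \<cdot>\<^bsub>\<delta>\<^esub> (a \<cdot>\<^bsub>\<delta>\<^esub> u \<cdot>\<^bsub>\<gamma>\<^esub> y) \<cdot>\<^bsub>\<alpha>\<^esub> a"
    using u witness_mem by (metis left_permutable closed)
  finally show ?thesis unfolding u_def .
qed

end

end

locale intra_regular_AGss = gamma_AGss_groupoid +
  assumes intra_reg: "intra_regular S G m"
begin

lemma obtain_witness:
  assumes "a \<in> S"
  obtains x y \<beta> \<gamma> \<delta> where "x \<in> S" "y \<in> S" "\<beta> \<in> G" "\<gamma> \<in> G" "\<delta> \<in> G"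
    and "a = x \<cdot>\<^bsub>\<beta>\<^esub> (a \<cdot>\<^bsub>\<delta>\<^esub> a) \<cdot>\<^bsub>\<gamma>\<^esub> y"
  using intra_reg assms unfolding intra_regular_def by blast

context
  fixes A assumes A_ne: "A \<noteq> {}" and A_sub: "A \<subseteq> S"
begin

lemma left_ideal_iff: "left_ideal S G m A \<longleftrightarrow> (\<forall>s\<in>S. \<forall>\<alpha>\<in>G. \<forall>a\<in>A. s \<cdot>\<^bsub>\<alpha>\<^esub> a \<in> A)"
  using A_ne A_sub unfolding left_ideal_def gprod_subset_iff by blast

lemma right_ideal_iff: "right_ideal S G m A \<longleftrightarrow> (\<forall>a\<in>A. \<forall>\<alpha>\<in>G. \<forall>s\<in>S. a \<cdot>\<^bsub>\<alpha>\<^esub> s \<in> A)"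
  using A_ne A_sub unfolding right_ideal_def gprod_subset_iff by blast

lemma left_idealI:
  assumes "\<And>s \<alpha> a x y \<beta> \<gamma> \<delta>. \<lbrakk>s \<in> S; \<alpha> \<in> G; a \<in> A; x \<in> S; y \<in> S; \<beta> \<in> G; \<gamma> \<in> G; \<delta> \<in> G;
      a = x \<cdot>\<^bsub>\<beta>\<^esub> (a \<cdot>\<^bsub>\<delta>\<^esub> a) \<cdot>\<^bsub>\<gamma>\<^esub> y\<rbrakk> \<Longrightarrow> s \<cdot>\<^bsub>\<alpha>\<^esub> a \<in> A"
  shows "left_ideal S G m A"
  unfolding left_ideal_iff
proof (intro ballI)
  fix s \<alpha> a assume "s \<in> S" "\<alpha> \<in> G" "a \<in> A"
  moreover obtain x y \<beta> \<gamma> \<delta> where "x \<in> S" "y \<in> S" "\<beta> \<in> G" "\<gamma> \<in> G" "\<delta> \<in> G"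
    and "a = x \<cdot>\<^bsub>\<beta>\<^esub> (a \<cdot>\<^bsub>\<delta>\<^esub> a) \<cdot>\<^bsub>\<gamma>\<^esub> y"
    using obtain_witness \<open>a \<in> A\<close> A_sub by blast
  ultimately show "s \<cdot>\<^bsub>\<alpha>\<^esub> a \<in> A" by (rule assms)
qed

lemma left_imp_right:
  assumes "left_ideal S G m A"
  shows "right_ideal S G m A"
  unfolding right_ideal_iff
proof (intro ballI)
  have L: "s \<cdot>\<^bsub>\<alpha>\<^esub> b \<in> A" if "s \<in> S" "\<alpha> \<in> G" "b \<in> A" for s \<alpha> b
    using assms that unfolding left_ideal_iff by blast
  fix a \<alpha> s assume a: "a \<in> A" and \<alpha>: "\<alpha> \<in> G" and s: "s \<in> S"
  have aS: "a \<in> S" using a A_sub by blast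
  obtain x y \<beta> \<gamma> \<delta> where w: "x \<in> S" "y \<in> S" "\<beta> \<in> G" "\<gamma> \<in> G" "\<delta> \<in> G"
    "a = x \<cdot>\<^bsub>\<beta>\<^esub> (a \<cdot>\<^bsub>\<delta>\<^esub> a) \<cdot>\<^bsub>\<gamma>\<^esub> y"
    using obtain_witness aS by blast
  have "a \<cdot>\<^bsub>\<delta>\<^esub> a \<in> A" using L aS w a by blast
  then have "s \<cdot>\<^bsub>\<gamma>\<^esub> y \<cdot>\<^bsub>\<beta>\<^esub> (a \<cdot>\<^bsub>\<delta>\<^esub> a) \<in> A" using L s w by simp
  then have "x \<cdot>\<^bsub>\<alpha>\<^esub> (s \<cdot>\<^bsub>\<gamma>\<^esub> y \<cdot>\<^bsub>\<beta>\<^esub> (a \<cdot>\<^bsub>\<delta>\<^esub> a)) \<in> A" using L \<alpha> w by simp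
  then show "a \<cdot>\<^bsub>\<alpha>\<^esub> s \<in> A" using witness_right[OF aS w s \<alpha>] by simp
qed

lemma right_imp_left:
  assumes "right_ideal S G m A"
  shows "left_ideal S G m A"
proof (rule left_idealI)
  have R: "b \<cdot>\<^bsub>\<alpha>\<^esub> s \<in> A" if "b \<in> A" "\<alpha> \<in> G" "s \<in> S" for b \<alpha> s
    using assms that unfolding right_ideal_iff by blast
  fix s \<alpha> a x y \<beta> \<gamma> \<delta>
  assume s: "s \<in> S" and \<alpha>: "\<alpha> \<in> G" and a: "a \<in> A"
    and w: "x \<in> S" "y \<in> S" "\<beta> \<in> G" "\<gamma> \<in> G" "\<delta> \<in> G" "a = x \<cdot>\<^bsub>\<beta>\<^esub> (a \<cdot>\<^bsub>\<delta>\<^esub> a) \<cdot>\<^bsub>\<gamma>\<^esub> y"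
  have aS: "a \<in> S" using a A_sub by blast
  have "a \<cdot>\<^bsub>\<beta>\<^esub> (s \<cdot>\<^bsub>\<gamma>\<^esub> y \<cdot>\<^bsub>\<delta>\<^esub> a) \<in> A" using R a aS s w by simp
  then have "s \<cdot>\<^bsub>\<gamma>\<^esub> y \<cdot>\<^bsub>\<beta>\<^esub> (a \<cdot>\<^bsub>\<delta>\<^esub> a) \<in> A" using s aS w by (simp add: left_permutable)
  then have "s \<cdot>\<^bsub>\<gamma>\<^esub> y \<cdot>\<^bsub>\<beta>\<^esub> (a \<cdot>\<^bsub>\<delta>\<^esub> a) \<cdot>\<^bsub>\<alpha>\<^esub> x \<in> A" using R \<alpha> w by simp
  then show "s \<cdot>\<^bsub>\<alpha>\<^esub> a \<in> A" using witness_quasi[OF aS w s \<alpha>] by simp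
qed

lemma left_imp_products:
  assumes "left_ideal S G m A"
  shows "gprod m A G S = A" "gprod m S G A = A"
proof -
  have R: "right_ideal S G m A" using assms by (rule left_imp_right)
  have "A \<subseteq> gprod m A G S \<and> A \<subseteq> gprod m S G A"
  proof (intro conjI subsetI)
    fix a assume a: "a \<in> A"
    then have aS: "a \<in> S" using A_sub by blast
    obtain x y \<beta> \<gamma> \<delta> where w: "x \<in> S" "y \<in> S" "\<beta> \<in> G" "\<gamma> \<in> G" "\<delta> \<in> G"
      "a = x \<cdot>\<^bsub>\<beta>\<^esub> (a \<cdot>\<^bsub>\<delta>\<^esub> a) \<cdot>\<^bsub>\<gamma>\<^esub> y"
      using obtain_witness aS by blast
    have "a \<cdot>\<^bsub>\<beta>\<^esub> (x \<cdot>\<^bsub>\<delta>\<^esub> a) \<in> A" using R a w aS unfolding right_ideal_iff by simp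
    then have "a \<cdot>\<^bsub>\<beta>\<^esub> (x \<cdot>\<^bsub>\<delta>\<^esub> a) \<cdot>\<^bsub>\<gamma>\<^esub> y \<in> gprod m A G S" using w by (simp add: gprod_memI)
    then show "a \<in> gprod m A G S" using witness_self_right[OF aS w] by simp
    have "y \<cdot>\<^bsub>\<beta>\<^esub> (x \<cdot>\<^bsub>\<delta>\<^esub> a) \<cdot>\<^bsub>\<gamma>\<^esub> a \<in> gprod m S G A" using a aS w by (simp add: gprod_memI)
    then show "a \<in> gprod m S G A" using witness_self_left[OF aS w] by simp
  qed
  moreover have "gprod m A G S \<subseteq> A" "gprod m S G A \<subseteq> A"
    using assms R unfolding left_ideal_def right_ideal_def by simp_all
  ultimately show "gprod m A G S = A" "gprod m S G A = A" by auto
qed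

lemma quasi_imp_left:
  assumes "quasi_ideal S G m A"
  shows "left_ideal S G m A"
proof (rule left_idealI)
  have AA: "gprod m A G A \<subseteq> A" and Q: "gprod m S G A \<inter> gprod m A G S \<subseteq> A"
    using assms unfolding quasi_ideal_def by simp_all
  fix s \<alpha> a x y \<beta> \<gamma> \<delta>
  assume s: "s \<in> S" and \<alpha>: "\<alpha> \<in> G" and a: "a \<in> A"
    and w: "x \<in> S" "y \<in> S" "\<beta> \<in> G" "\<gamma> \<in> G" "\<delta> \<in> G" "a = x \<cdot>\<^bsub>\<beta>\<^esub> (a \<cdot>\<^bsub>\<delta>\<^esub> a) \<cdot>\<^bsub>\<gamma>\<^esub> y"
  have aS: "a \<in> S" using a A_sub by blast
  have "a \<cdot>\<^bsub>\<delta>\<^esub> a \<in> A" using AA a w by (blast intro: gprod_memI)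
  then have "s \<cdot>\<^bsub>\<gamma>\<^esub> y \<cdot>\<^bsub>\<beta>\<^esub> (a \<cdot>\<^bsub>\<delta>\<^esub> a) \<in> gprod m S G A" using s w by (simp add: gprod_memI)
  moreover have "s \<cdot>\<^bsub>\<gamma>\<^esub> y \<cdot>\<^bsub>\<beta>\<^esub> (a \<cdot>\<^bsub>\<delta>\<^esub> a) \<in> gprod m A G S"
    using s w a aS by (simp add: left_permutable gprod_memI)
  ultimately have "s \<cdot>\<^bsub>\<gamma>\<^esub> y \<cdot>\<^bsub>\<beta>\<^esub> (a \<cdot>\<^bsub>\<delta>\<^esub> a) \<in> A" using Q by blast
  then have "s \<cdot>\<^bsub>\<alpha>\<^esub> a \<in> gprod m A G S"
    using witness_quasi[OF aS w s \<alpha>] \<alpha> w by (simp add: gprod_memI)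
  moreover have "s \<cdot>\<^bsub>\<alpha>\<^esub> a \<in> gprod m S G A" using s \<alpha> a by (rule gprod_memI)
  ultimately show "s \<cdot>\<^bsub>\<alpha>\<^esub> a \<in> A" using Q by blast
qed

lemma one_two_imp_left:
  assumes "one_two_ideal S G m A"
  shows "left_ideal S G m A"
proof (rule left_idealI)
  fix s \<alpha> a x y \<beta> \<gamma> \<delta>
  assume s: "s \<in> S" and \<alpha>: "\<alpha> \<in> G" and a: "a \<in> A"
    and w: "x \<in> S" "y \<in> S" "\<beta> \<in> G" "\<gamma> \<in> G" "\<delta> \<in> G" "a = x \<cdot>\<^bsub>\<beta>\<^esub> (a \<cdot>\<^bsub>\<delta>\<^esub> a) \<cdot>\<^bsub>\<gamma>\<^esub> y"
  have aS: "a \<in> S" using a A_sub by blast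
  have "a \<cdot>\<^bsub>\<delta>\<^esub> (s \<cdot>\<^bsub>\<gamma>\<^esub> y \<cdot>\<^bsub>\<beta>\<^esub> x \<cdot>\<^bsub>\<beta>\<^esub> x \<cdot>\<^bsub>\<gamma>\<^esub> y) \<cdot>\<^bsub>\<alpha>\<^esub> (a \<cdot>\<^bsub>\<delta>\<^esub> a) \<in> gprod m (gprod m A G S) G (gprod m A G A)"
    using a aS s \<alpha> w by (simp add: gprod_memI)
  then show "s \<cdot>\<^bsub>\<alpha>\<^esub> a \<in> A"
    using assms witness_one_two[OF aS w s \<alpha>] unfolding one_two_ideal_def by auto
qed

lemma gen_bi_imp_left:
  assumes "gen_bi_ideal S G m A"
  shows "left_ideal S G m A"
proof (rule left_idealI)
  fix s \<alpha> a x y \<beta> \<gamma> \<delta>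
  assume s: "s \<in> S" and \<alpha>: "\<alpha> \<in> G" and a: "a \<in> A"
    and w: "x \<in> S" "y \<in> S" "\<beta> \<in> G" "\<gamma> \<in> G" "\<delta> \<in> G" "a = x \<cdot>\<^bsub>\<beta>\<^esub> (a \<cdot>\<^bsub>\<delta>\<^esub> a) \<cdot>\<^bsub>\<gamma>\<^esub> y"
  have aS: "a \<in> S" using a A_sub by blast
  have "a \<cdot>\<^bsub>\<delta>\<^esub> (a \<cdot>\<^bsub>\<delta>\<^esub> (s \<cdot>\<^bsub>\<gamma>\<^esub> y \<cdot>\<^bsub>\<beta>\<^esub> x \<cdot>\<^bsub>\<beta>\<^esub> x) \<cdot>\<^bsub>\<gamma>\<^esub> y) \<cdot>\<^bsub>\<alpha>\<^esub> a \<in> gprod m (gprod m A G S) G A"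
    using a aS s \<alpha> w by (simp add: gprod_memI)
  then show "s \<cdot>\<^bsub>\<alpha>\<^esub> a \<in> A"
    using assms witness_gen_bi[OF aS w s \<alpha>] unfolding gen_bi_ideal_def by auto
qed

lemma interior_imp_left:
  assumes "interior_ideal S G m A"
  shows "left_ideal S G m A"
proof (rule left_idealI)
  have AA: "gprod m A G A \<subseteq> A" and I: "gprod m (gprod m S G A) G S \<subseteq> A"
    using assms unfolding interior_ideal_def by simp_all
  fix s \<alpha> a x y \<beta> \<gamma> \<delta>
  assume s: "s \<in> S" and \<alpha>: "\<alpha> \<in> G" and a: "a \<in> A"
    and w: "x \<in> S" "y \<in> S" "\<beta> \<in> G" "\<gamma> \<in> G" "\<delta> \<in> G" "a = x \<cdot>\<^bsub>\<beta>\<^esub> (a \<cdot>\<^bsub>\<delta>\<^esub> a) \<cdot>\<^bsub>\<gamma>\<^esub> y"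
  have aS: "a \<in> S" using a A_sub by blast
  have "a \<cdot>\<^bsub>\<delta>\<^esub> a \<in> A" using AA a w by (blast intro: gprod_memI)
  then have "x \<cdot>\<^bsub>\<beta>\<^esub> (a \<cdot>\<^bsub>\<delta>\<^esub> a) \<cdot>\<^bsub>\<alpha>\<^esub> (s \<cdot>\<^bsub>\<gamma>\<^esub> y) \<in> gprod m (gprod m S G A) G S"
    using s \<alpha> w by (simp add: gprod_memI)
  then show "s \<cdot>\<^bsub>\<alpha>\<^esub> a \<in> A" using I witness_interior[OF aS w s \<alpha>] by auto
qed

lemma ideal_conditions_iff_left:
  shows "right_ideal S G m A \<longleftrightarrow> left_ideal S G m A"
    and "two_sided_ideal S G m A \<longleftrightarrow> left_ideal S G m A"
    and "(gprod m A G S = A \<and> gprod m S G A = A) \<longleftrightarrow> left_ideal S G m A"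
    and "quasi_ideal S G m A \<longleftrightarrow> left_ideal S G m A"
    and "one_two_ideal S G m A \<longleftrightarrow> left_ideal S G m A"
    and "gen_bi_ideal S G m A \<longleftrightarrow> left_ideal S G m A"
    and "bi_ideal S G m A \<longleftrightarrow> left_ideal S G m A"
    and "interior_ideal S G m A \<longleftrightarrow> left_ideal S G m A"
proof -
  have two_sided: "two_sided_ideal S G m A \<longleftrightarrow> left_ideal S G m A"
    unfolding two_sided_ideal_def using left_imp_right by blast
  then show "two_sided_ideal S G m A \<longleftrightarrow> left_ideal S G m A" .
  show "right_ideal S G m A \<longleftrightarrow> left_ideal S G m A"
    using left_imp_right right_imp_left by blast
  show "(gprod m A G S = A \<and> gprod m S G A = A) \<longleftrightarrow> left_ideal S G m A"
    using left_imp_products left_ideal_if_product_eq[OF A_ne A_sub] by blast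
  show "quasi_ideal S G m A \<longleftrightarrow> left_ideal S G m A"
    using quasi_imp_left two_sided_imp_quasi[of S G m A] two_sided by blast
  show "one_two_ideal S G m A \<longleftrightarrow> left_ideal S G m A"
    using one_two_imp_left two_sided_imp_one_two[of S G m A] two_sided by blast
  show "bi_ideal S G m A \<longleftrightarrow> left_ideal S G m A"
    using gen_bi_imp_left bi_imp_gen_bi[of S G m A] two_sided_imp_bi[of S G m A] two_sided
    by blast
  show "gen_bi_ideal S G m A \<longleftrightarrow> left_ideal S G m A"
    using gen_bi_imp_left bi_imp_gen_bi[of S G m A] two_sided_imp_bi[of S G m A] two_sided
    by blast
  show "interior_ideal S G m A \<longleftrightarrow> left_ideal S G m A"
    using interior_imp_left two_sided_imp_interior[of S G m A] two_sided by blast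
qed

end

end

theorem mainTheorem9:
  fixes S :: "'a set" and G :: "'g set" and m :: "'a \<Rightarrow> 'g \<Rightarrow> 'a \<Rightarrow> 'a" and A :: "'a set"
  assumes "gamma_AGss S G m" and "intra_regular S G m"
    and "A \<noteq> {}" and "A \<subseteq> S"
  shows "(left_ideal S G m A \<longleftrightarrow> right_ideal S G m A)
    \<and> (right_ideal S G m A \<longleftrightarrow> two_sided_ideal S G m A)
    \<and> (two_sided_ideal S G m A \<longleftrightarrow> (gprod m A G S = A \<and> gprod m S G A = A))
    \<and> ((gprod m A G S = A \<and> gprod m S G A = A) \<longleftrightarrow> quasi_ideal S G m A)
    \<and> (quasi_ideal S G m A \<longleftrightarrow> one_two_ideal S G m A)
    \<and> (one_two_ideal S G m A \<longleftrightarrow> gen_bi_ideal S G m A)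
    \<and> (gen_bi_ideal S G m A \<longleftrightarrow> bi_ideal S G m A)
    \<and> (bi_ideal S G m A \<longleftrightarrow> interior_ideal S G m A)"
proof -
  interpret intra_regular_AGss S G m
    using assms(1,2) by (simp add: intra_regular_AGss_def intra_regular_AGss_axioms_def
        gamma_AGss_groupoid_def)
  show ?thesis
    unfolding ideal_conditions_iff_left[OF assms(3,4)] by simp
qed

end
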